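(* Consider the uplink access-probability optimization problem $$\max_{\mathbf p=(p_1,\dots,p_N)} \ \eta(\mathbf p)=\sum_{\boldsymbol\sigma\in\mathcal I}\sum_{j=1}^N R_j^{\boldsymbol\sigma}\,\sigma_j\,\pi(\boldsymbol\sigma)$$ subject to $\mathsf{EC}_j(\mathbf p;\theta_j)\ge \mathsf{EB}_j(\theta_j)$ and $0<p_j\le 1$ for all $j=1,\dots,N$, where all quantities are as defined in the context. This optimization problem is non-concave with respect to the access probability vector $\mathbf p$.
   Context: A coordinator with $M$ photo-detectors serves $N$ devices ($N>M$), each with a single LED. In each time slot, device $j$ transmits independently with access probability $p_j$, and its line-of-sight link is unblocked independently with probability $\beta_j\in(0,1]$. A state is a vector $\boldsymbol\sigma=(\sigma_1,\dots,\sigma_N)\in\{0,1\}^N$, where $\sigma_j=1$ means device $j$ transmits and is unblocked. Its probability is $\pi(\boldsymbol\sigma)=\prod_{k=1}^N\big[(1-\sigma_k)(1-p_k\beta_k)+\sigma_k p_k\beta_k\big]$. The set of feasible access states is $\mathcal I=\{\boldsymbol\sigma:\sum_j\sigma_j\le M\}$. In a feasible state $\boldsymbol\sigma$ with $\sigma_j=1$, device $j$ achieves rate $R_j^{\boldsymbol\sigma}=B\log_2(1+\gamma_j^{\boldsymbol\sigma})$. Here $B>0$ is the bandwidth and $\gamma_j^{\boldsymbol\sigma}$ is the SINR of device $j$ under ideal (error-free) MMSE successive interference cancellation at the coordinator: $$\gamma_j^{\boldsymbol\sigma}=\xi^2P_t^2\,\mathbf h_j^T\Big(\sum_{k}\xi^2P_t^2\mathbf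 h_k\mathbf h_k^T+\sigma_{\mathrm{VLC}}^2\mathbf I_M\Big)^{-1}\mathbf h_j .$$ The sum runs over the active devices $k$ decoded after $j$ in the SIC order. The parameters are as follows: - $\mathbf h_j\in\mathbb R_{\ge0}^M$ is the fixed line-of-sight channel gain vector of device $j$; - $\xi>0$ is the detector responsivity; - $P_t>0$ is the transmit power; - $\sigma_{\mathrm{VLC}}^2>0$ is the noise variance. In an infeasible state, no device is decoded and it has rate $0$. The effective capacity of device $j$ with QoS exponent $\theta_j>0$ is $$\mathsf{EC}_j(\mathbf p;\theta_j)=-\frac1{\theta_j}\ln\Big\{1-\sum_{\boldsymbol\sigma\in\mathcal I}\big(1-e^{-\theta_jR_j^{\boldsymbol\sigma}}\big)\sigma_j\pi(\boldsymbol\sigma)\Big\}.$$ $\mathsf{EB}_j(\theta_j)$ is the effective bandwidth of device $j$'s arrival process: $\mathsf{EB}_j(\theta_j)=\frac1{\theta_j}\lim_{t\to\infty}\frac1t\ln\mathbb E[e^{\theta_jA_j(t)}]$, where $A_j(t)$ is the accumulated arrival process of device $j$ over $[0,t)$. A maximization problem is called concave if its objective is concave and its feasible set is convex. *)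

theory Defs
  imports "HOL-Analysis.Analysis"
begin

text \<open>Devices are indexed by a finite type 'n (N = CARD('n)), photo-detectors by a
finite type 'm (M = CARD('m)).  A state sigma in {0,1}^N is represented by the set A of
devices j with sigma_j = 1.  The SIC decoding order is given by an injective
ranking ord : 'n => nat; device k is decoded after device j iff ord j < ord k.\<close>

definition outer :: "real^'m \<Rightarrow> real^'m^'m" where
  "outer v = (\<chi> i l. v $ i * v $ l)"

definition sinr ::
  "real \<Rightarrow> real \<Rightarrow> real \<Rightarrow> ('n \<Rightarrow> nat) \<Rightarrow> ('n \<Rightarrow> real^'m) \<Rightarrow> 'n set \<Rightarrow> 'n \<Rightarrow> real" where
  "sinr xi Pt s2 ord h A j =
     xi^2 * Pt^2 * (h j \<bullet> (matrix_inv
        ((\<Sum>k\<in>{k\<in>A. ord j < ord k}. (xi^2 * Pt^2) *\<^sub>R outer (h k)) + s2 *\<^sub>R mat 1)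
        *v h j))"

definition rate ::
  "real \<Rightarrow> real \<Rightarrow> real \<Rightarrow> real \<Rightarrow> ('n \<Rightarrow> nat) \<Rightarrow> ('n \<Rightarrow> real^'m) \<Rightarrow> 'n set \<Rightarrow> 'n \<Rightarrow> real" where
  "rate B xi Pt s2 ord h A j = B * log 2 (1 + sinr xi Pt s2 ord h A j)"

definition state_prob :: "real^'n \<Rightarrow> ('n \<Rightarrow> real) \<Rightarrow> 'n set \<Rightarrow> real" where
  "state_prob p \<beta> A = (\<Prod>k\<in>UNIV. if k \<in> A then p $ k * \<beta> k else 1 - p $ k * \<beta> k)"

definition feasible_states :: "'m itself \<Rightarrow> 'n::finite set set" where
  "feasible_states _ = {A. card A \<le> CARD('m)}"

definition throughput ::
  "real \<Rightarrow> real \<Rightarrow> real \<Rightarrow> real \<Rightarrow> ('n::finite \<Rightarrow> nat) \<Rightarrow> ('n \<Rightarrow> real^'m) \<Rightarrow> ('n \<Rightarrow> real)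
   \<Rightarrow> real^'n \<Rightarrow> real" where
  "throughput B xi Pt s2 ord h \<beta> p =
     (\<Sum>A\<in>feasible_states TYPE('m). \<Sum>j\<in>A. rate B xi Pt s2 ord h A j * state_prob p \<beta> A)"

definition eff_cap ::
  "real \<Rightarrow> real \<Rightarrow> real \<Rightarrow> real \<Rightarrow> ('n::finite \<Rightarrow> nat) \<Rightarrow> ('n \<Rightarrow> real^'m) \<Rightarrow> ('n \<Rightarrow> real)
   \<Rightarrow> real \<Rightarrow> 'n \<Rightarrow> real^'n \<Rightarrow> real" where
  "eff_cap B xi Pt s2 ord h \<beta> \<theta> j p =
     - (1 / \<theta>) * ln (1 - (\<Sum>A\<in>{A\<in>feasible_states TYPE('m). j \<in> A}.
          (1 - exp (- \<theta> * rate B xi Pt s2 ord h A j)) * state_prob p \<beta> A))"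

definition feasible_set ::
  "real \<Rightarrow> real \<Rightarrow> real \<Rightarrow> real \<Rightarrow> ('n::finite \<Rightarrow> nat) \<Rightarrow> ('n \<Rightarrow> real^'m) \<Rightarrow> ('n \<Rightarrow> real)
   \<Rightarrow> ('n \<Rightarrow> real) \<Rightarrow> ('n \<Rightarrow> real) \<Rightarrow> (real^'n) set" where
  "feasible_set B xi Pt s2 ord h \<beta> \<theta> EB =
     {p. \<forall>j. 0 < p $ j \<and> p $ j \<le> 1 \<and> eff_cap B xi Pt s2 ord h \<beta> (\<theta> j) j p \<ge> EB j}"

definition concave_max_problem :: "'a::real_vector set \<Rightarrow> ('a \<Rightarrow> real) \<Rightarrow> bool" where
  "concave_max_problem F f \<longleftrightarrow> convex F \<and> concave_on F f"

end

theory Submission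
  imports Defs
begin

text \<open>
  Give only device \<open>j\<close> a nonzero channel. It then never suffers interference, so its
  rate is a constant \<open>r > 0\<close> in every state while all other rates vanish, and the
  throughput is \<open>r\<close> times the probability that \<open>j\<close> is active in a feasible state.
  Let a set \<open>T\<close> of \<open>M - 1\<close> other devices transmit with probability 1: the only feasible
  state containing \<open>j\<close> that has positive probability is then \<open>{j} \<union> T\<close>. Along the line
  \<open>p\<^sub>j = s\<close>, \<open>p\<^sub>k = 1 - s\<close> for one further device \<open>k\<close>, this probability is \<open>c s\<^sup>2\<close> with
  \<open>c > 0\<close>, so the throughput is strictly convex on a segment of the feasible set.
  Effective capacities are never negative, so taking \<open>EB = 0\<close> keeps the whole segment
  feasible.
\<close>

lemma matrix_inv_scaleR_mat_1:
  assumes "c \<noteq> 0"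
  shows "matrix_inv (c *\<^sub>R mat 1 :: real^'m^'m) = inverse c *\<^sub>R mat 1"
proof -
  have "\<exists>X::real^'m^'m. (c *\<^sub>R mat 1) ** X = mat 1 \<and> X ** (c *\<^sub>R mat 1) = mat 1"
    using assms by (intro exI[of _ "inverse c *\<^sub>R mat 1"])
      (simp add: matrix_scalar_ac scalar_matrix_assoc[symmetric])
  then have "(c *\<^sub>R mat 1) ** matrix_inv (c *\<^sub>R mat 1 :: real^'m^'m) = mat 1"
    unfolding matrix_inv_def by (rule someI_ex[THEN conjunct1])
  then have "c *\<^sub>R matrix_inv (c *\<^sub>R mat 1 :: real^'m^'m) = mat 1"
    by (simp add: scalar_matrix_assoc[symmetric])
  then show ?thesis
    using assms by (metis scaleR_scaleR left_inverse scaleR_one)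
qed

lemma sinr_interference_free:
  fixes h :: "'n \<Rightarrow> real^'m"
  assumes "s2 \<noteq> 0" and "\<And>k. k \<in> A \<Longrightarrow> ord j < ord k \<Longrightarrow> h k = 0"
  shows "sinr xi Pt s2 ord h A j = xi^2 * Pt^2 / s2 * (h j \<bullet> h j)"
proof -
  have "(\<Sum>k\<in>{k\<in>A. ord j < ord k}. (xi^2 * Pt^2) *\<^sub>R outer (h k)) = 0"
    using assms(2) by (intro sum.neutral) (simp add: outer_def vec_eq_iff)
  then show ?thesis
    using assms(1)
    by (simp add: sinr_def matrix_inv_scaleR_mat_1 scaleR_matrix_vector_assoc[symmetric] divide_inverse)
qed

lemma sinr_zero_channel: "h j = 0 \<Longrightarrow> sinr xi Pt s2 ord h A j = 0"
  by (simp add: sinr_def)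

lemma rate_single_channel:
  fixes h :: "'n \<Rightarrow> real^'m"
  assumes "s2 \<noteq> 0" and "\<And>i. i \<noteq> j \<Longrightarrow> h i = 0"
  shows "rate B xi Pt s2 ord h A i =
           (if i = j then B * log 2 (1 + xi^2 * Pt^2 / s2 * (h j \<bullet> h j)) else 0)"
proof (cases "i = j")
  case True
  have "k \<in> A \<Longrightarrow> ord i < ord k \<Longrightarrow> h k = 0" for k
    using True assms(2) by (metis less_irrefl)
  then show ?thesis
    using True assms(1) by (simp add: rate_def sinr_interference_free)
qed (simp add: rate_def sinr_zero_channel assms(2))

lemma throughput_single_user:
  fixes h :: "'n::finite \<Rightarrow> real^'m"
  assumes "\<And>A i. rate B xi Pt s2 ord h A i = (if i = j then r else 0)"
  shows "throughput B xi Pt s2 ord h \<beta> p =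
           r * (\<Sum>A\<in>{A\<in>feasible_states TYPE('m). j \<in> A}. state_prob p \<beta> A)"
proof -
  have "throughput B xi Pt s2 ord h \<beta> p =
          (\<Sum>A\<in>feasible_states TYPE('m). if j \<in> A then r * state_prob p \<beta> A else 0)"
    unfolding throughput_def assms
    by (intro sum.cong refl) (simp add: if_distrib[of "\<lambda>x. x * _"] sum.delta cong: if_cong)
  then show ?thesis
    by (simp add: sum.inter_filter[symmetric] sum_distrib_left if_distrib[of "(*) r"])
qed

lemma eff_cap_single_user_nonneg:
  fixes h :: "'n::finite \<Rightarrow> real^'m"
  assumes "\<And>A i. rate B xi Pt s2 ord h A i = (if i = j then r else 0)"
    and "\<theta> > 0" and "r \<ge> 0"
    and "0 \<le> (\<Sum>A\<in>{A\<in>feasible_states TYPE('m). j \<in> A}. state_prob p \<beta> A)"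
    and "(\<Sum>A\<in>{A\<in>feasible_states TYPE('m). j \<in> A}. state_prob p \<beta> A) \<le> 1"
  shows "eff_cap B xi Pt s2 ord h \<beta> \<theta> i p \<ge> 0"
proof (cases "i = j")
  case True
  let ?q = "\<Sum>A\<in>{A\<in>feasible_states TYPE('m). j \<in> A}. state_prob p \<beta> A"
  have "0 \<le> (1 - exp (- \<theta> * r)) * ?q" "(1 - exp (- \<theta> * r)) * ?q \<le> 1"
    using assms(2-5) by (auto intro!: mult_nonneg_nonneg mult_le_one)
  then have "ln (1 - (1 - exp (- \<theta> * r)) * ?q) \<le> 0"
    by (cases "(1 - exp (- \<theta> * r)) * ?q = 1") auto
  moreover have "eff_cap B xi Pt s2 ord h \<beta> \<theta> i p =
                   - (1 / \<theta>) * ln (1 - (1 - exp (- \<theta> * r)) * ?q)"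
    unfolding eff_cap_def assms(1) True by (simp add: sum_distrib_left)
  ultimately show ?thesis
    using assms(2) by (simp add: divide_nonpos_pos)
qed (simp add: eff_cap_def assms(1))

lemma state_prob_eq_0:
  assumes "t \<notin> A" and "p $ t * \<beta> t = 1"
  shows "state_prob p \<beta> A = 0"
  unfolding state_prob_def using assms by (intro prod_zero) auto

lemma sum_state_prob_saturated:
  fixes p :: "real^'n::finite"
  assumes "card (insert j T) = CARD('m)" and "\<And>t. t \<in> T \<Longrightarrow> p $ t * \<beta> t = 1"
  shows "(\<Sum>A\<in>{A\<in>feasible_states TYPE('m). j \<in> A}. state_prob p \<beta> A) = state_prob p \<beta> (insert j T)"
proof -
  have "state_prob p \<beta> A = 0"
    if "A \<in> {A\<in>feasible_states TYPE('m). j \<in> A} - {insert j T}" for A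
  proof (cases "T \<subseteq> A")
    case True
    with that have "insert j T \<subset> A" by auto
    then have "card (insert j T) < card A" by (simp add: psubset_card_mono)
    with that assms(1) show ?thesis by (simp add: feasible_states_def)
  next
    case False
    then show ?thesis using assms(2) by (auto intro: state_prob_eq_0)
  qed
  moreover have "insert j T \<in> {A\<in>feasible_states TYPE('m). j \<in> A}"
    using assms(1) by (simp add: feasible_states_def)
  ultimately have "(\<Sum>A\<in>{insert j T}. state_prob p \<beta> A) =
                    (\<Sum>A\<in>{A\<in>feasible_states TYPE('m). j \<in> A}. state_prob p \<beta> A)"
    by (intro sum.mono_neutral_left) auto
  then show ?thesis
    by simp
qed

definition access_line :: "'n \<Rightarrow> 'n \<Rightarrow> 'n set \<Rightarrow> real \<Rightarrow> real^'n" where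
  "access_line j k T s = (\<chi> i. if i = j then s else if i = k then 1 - s else if i \<in> T then 1 else 1/2)"

lemma state_prob_access_line:
  fixes j k :: "'n::finite"
  assumes "j \<noteq> k" and "j \<notin> T" and "k \<notin> T"
  shows "state_prob (access_line j k T s) (\<lambda>_. 1) (insert j T) =
           s^2 * (1/2) ^ card (- insert j (insert k T))"
proof -
  let ?R = "- insert j (insert k T)"
  define f where
    "f i = (if i \<in> insert j T then access_line j k T s $ i * 1 else 1 - access_line j k T s $ i * 1)"
    for i
  have partition: "insert j (insert k (T \<union> ?R)) = UNIV"
    by auto
  have "state_prob (access_line j k T s) (\<lambda>_. 1) (insert j T) =
          prod f (insert j (insert k (T \<union> ?R)))"
    unfolding state_prob_def partition f_def ..
  also have "\<dots> = f j * (f k * (prod f T * prod f ?R))"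
    using assms by (simp add: prod.union_disjoint[of T ?R] Diff_eq[symmetric])
  also have "\<dots> = s * (s * ((\<Prod>i\<in>T. 1) * (\<Prod>i\<in>?R. 1/2)))"
    using assms by (intro arg_cong2[where f = "(*)"] prod.cong) (auto simp: f_def access_line_def)
  finally show ?thesis
    by (simp add: power2_eq_square)
qed

lemma sum_state_prob_access_line:
  fixes j k :: "'n::finite"
  assumes "j \<noteq> k" and "j \<notin> T" and "k \<notin> T" and "card (insert j T) = CARD('m)"
  shows "(\<Sum>A\<in>{A\<in>feasible_states TYPE('m). j \<in> A}. state_prob (access_line j k T s) (\<lambda>_. 1) A) =
           (1/2) ^ card (- insert j (insert k T)) * s^2"
proof -
  have "access_line j k T s $ t * 1 = 1" if "t \<in> T" for t
    using that assms by (auto simp: access_line_def)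
  from sum_state_prob_saturated[OF assms(4) this] show ?thesis
    by (simp add: state_prob_access_line[OF assms(1-3)])
qed

lemma access_line_in_feasible_set:
  fixes h :: "'n::finite \<Rightarrow> real^'m"
  assumes "\<And>A i. rate B xi Pt s2 ord h A i = (if i = j then r else 0)" and "r \<ge> 0"
    and "\<And>i. \<theta> i > 0"
    and "j \<noteq> k" and "j \<notin> T" and "k \<notin> T" and "card (insert j T) = CARD('m)"
    and "0 < s" and "s < 1"
  shows "access_line j k T s \<in> feasible_set B xi Pt s2 ord h (\<lambda>_. 1) \<theta> (\<lambda>_. 0)"
proof -
  have "(1/2) ^ card (- insert j (insert k T)) * s^2 \<le> 1"
    using assms(8,9) by (simp add: mult_le_one power_le_one)
  then have "eff_cap B xi Pt s2 ord h (\<lambda>_. 1) (\<theta> i) i (access_line j k T s) \<ge> 0" for i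
    using assms(2,3) by (intro eff_cap_single_user_nonneg[OF assms(1)])
      (simp_all add: sum_state_prob_access_line[OF assms(4-7)])
  then show ?thesis
    using assms(8,9) by (simp add: feasible_set_def access_line_def)
qed

lemma not_concave_max_problem_midpoint:
  assumes "x \<in> F" and "y \<in> F" and "f (midpoint x y) < (f x + f y) / 2"
  shows "\<not> concave_max_problem F f"
proof
  assume "concave_max_problem F f"
  then have "(1 - 1/2) * f x + 1/2 * f y \<le> f ((1 - 1/2) *\<^sub>R x + (1/2) *\<^sub>R y)"
    using assms(1,2) by (intro concave_onD) (auto simp: concave_max_problem_def)
  with assms(3) show False
    by (simp add: midpoint_def scaleR_right_distrib)
qed

lemma obtain_saturating_pattern:
  assumes "CARD('m::finite) < CARD('n::finite)"
  obtains j k :: "'n::finite" and T where "j \<noteq> k" "j \<notin> T" "k \<notin> T" "card (insert j T) = CARD('m)"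
proof -
  obtain S :: "'n set" where S: "card S = Suc CARD('m)"
    using assms obtain_subset_with_card_n[of "Suc CARD('m)" UNIV] by (auto simp: Suc_le_eq)
  then obtain k where k: "k \<in> S"
    by fastforce
  then have Sk: "card (S - {k}) = CARD('m)"
    using S by simp
  moreover have "CARD('m) \<noteq> 0"
    by simp
  ultimately obtain j where j: "j \<in> S - {k}"
    by (metis card.empty ex_in_conv)
  have "insert j (S - {j, k}) = S - {k}"
    using j by auto
  with j Sk show thesis
    by (intro that[of j k "S - {j, k}"]) auto
qed

theorem theorem3p1:
  assumes "CARD('n::finite) > CARD('m::finite)"
  shows "\<exists>(B::real) (xi::real) (Pt::real) (s2::real) (ord::'n \<Rightarrow> nat) (h::'n \<Rightarrow> real^'m)
            (\<beta>::'n \<Rightarrow> real) (\<theta>::'n \<Rightarrow> real) (EB::'n \<Rightarrow> real).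
           B > 0 \<and> xi > 0 \<and> Pt > 0 \<and> s2 > 0 \<and> inj ord \<and>
           (\<forall>j i. h j $ i \<ge> 0) \<and> (\<forall>j. 0 < \<beta> j \<and> \<beta> j \<le> 1) \<and>
           (\<forall>j. \<theta> j > 0) \<and> (\<forall>j. EB j \<ge> 0) \<and>
           \<not> concave_max_problem (feasible_set B xi Pt s2 ord h \<beta> \<theta> EB)
                                  (throughput B xi Pt s2 ord h \<beta>)"
proof -
  obtain j k :: 'n and T where pattern: "j \<noteq> k" "j \<notin> T" "k \<notin> T" "card (insert j T) = CARD('m)"
    using assms by (rule obtain_saturating_pattern)
  define h :: "'n \<Rightarrow> real^'m" where "h i = (if i = j then (\<chi> _. 1) else 0)" for i
  define ord :: "'n \<Rightarrow> nat" where "ord = to_nat_on UNIV"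
  define r where "r = log 2 (1 + real CARD('m))"
  define c where "c = (1/2::real) ^ card (- insert j (insert k T))"
  let ?line = "access_line j k T"
  have "h i = 0" if "i \<noteq> j" for i
    using that by (simp add: h_def)
  from rate_single_channel[where h = h and j = j, OF one_neq_zero this]
  have rate: "rate 1 1 1 1 ord h A i = (if i = j then r else 0)" for A i
    by (simp add: h_def r_def inner_vec_def)
  have throughput: "throughput 1 1 1 1 ord h (\<lambda>_. 1) (?line s) = r * c * s^2" for s
    using throughput_single_user[OF rate] sum_state_prob_access_line[OF pattern] by (simp add: c_def)
  have feasible: "?line s \<in> feasible_set 1 1 1 1 ord h (\<lambda>_. 1) (\<lambda>_. 1) (\<lambda>_. 0)"
    if "0 < s" "s < 1" for s
    using access_line_in_feasible_set[OF rate _ _ pattern that] by (simp add: r_def)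
  have "midpoint (?line (1/4)) (?line (3/4)) = ?line (1/2)"
    by (simp add: access_line_def midpoint_def vec_eq_iff)
  moreover have "r * c > 0"
    by (simp add: r_def c_def)
  ultimately have "\<not> concave_max_problem (feasible_set 1 1 1 1 ord h (\<lambda>_. 1) (\<lambda>_. 1) (\<lambda>_. 0))
                                         (throughput 1 1 1 1 ord h (\<lambda>_. 1))"
    by (intro not_concave_max_problem_midpoint[of "?line (1/4)" _ "?line (3/4)"] feasible)
       (simp_all add: throughput power2_eq_square mult_ac)
  moreover have "inj ord"
    by (simp add: ord_def inj_on_to_nat_on)
  moreover have "\<forall>i l. h i $ l \<ge> 0"
    by (simp add: h_def)
  ultimately show ?thesis
    by (intro exI[of _ 1] exI[of _ ord] exI[of _ h] exI[of _ "\<lambda>_. 1"] exI[of _ "\<lambda>_. 0"]) simp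
qed

end
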